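(* Let $\Sigma$ be a finite alphabet and $\emptyset \subsetneq L \subsetneq \Sigma^*$. Then for all $n\ge 0$, $V_L(n) = \log |\psi_L(\Sigma^{\le n})|$.
   Context: $\log x$ denotes $\lfloor\log_2 x\rfloor$; $\Sigma^{\le n}$ is the set of words of length at most $n$. The Myhill–Nerode congruence: $x\sim_L y$ iff for all $z$, $xz\in L\iff yz\in L$. Define $\psi_L(a_1\cdots a_n)=[a_1\cdots a_n]_{\sim_L}[a_2\cdots a_n]_{\sim_L}\cdots[a_n]_{\sim_L}$, a word over the set of $\sim_L$-classes (with $\psi_L(\varepsilon)=\varepsilon$). Variable-size sliding window model: a streaming algorithm over an alphabet is a deterministic (possibly infinite-state) automaton with an injective encoding $\mathrm{enc}$ of states into bit strings, and $\mathrm{space}(\mathcal{A},w)=\max\{|\mathrm{enc}(\mathcal{A}(u))|:u\text{ prefix of }w\}$. Let $\overline\Sigma=\Sigma\cup\{\downarrow\}$ and $\mathrm{wnd}(\varepsilon)=\varepsilon$, $\mathrm{wnd}(ub)=\mathrm{wnd}(u)b$ for $b\in\Sigma$, $\mathrm{wnd}(u\!\downarrow)=\varepsilon$ if $\mathrm{wnd}(u)=\varepsilon$, $\mathrm{wnd}(u\!\downarrow)=v$ if $\mathrm{wnd}(u)=bv$. A variable-size sliding window algorithm for $L$ is a streaming algorithm over $\overline\Sigma$ accepting $\{w:\mathrm{wnd}(w)\in L\}$ with space complexity $v_\mathcal{A}(n)=\max\{\mathrm{space}(\mathcal{A},u):|\mathrm{wnd}(v)|\le n\text{ for all prefixes }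 v \text{ of } u\}$. $V_L(n)$ is the minimum of $v_\mathcal{A}(n)$ over all variable-size sliding window algorithms for $L$. *)

theory Defs
  imports Complex_Main "HOL-Library.Extended_Nat"
begin

definition mn_equiv :: "'a list set \<Rightarrow> 'a list \<Rightarrow> 'a list \<Rightarrow> bool" where
  "mn_equiv L x y \<longleftrightarrow> (\<forall>z. x @ z \<in> L \<longleftrightarrow> y @ z \<in> L)"

definition mn_class :: "'a list set \<Rightarrow> 'a list \<Rightarrow> 'a list set" where
  "mn_class L x = {y. mn_equiv L x y}"

definition psi :: "'a list set \<Rightarrow> 'a list \<Rightarrow> 'a list set list" where
  "psi L w = map (\<lambda>i. mn_class L (drop i w)) [0..<length w]"

definition log2floor :: "nat \<Rightarrow> nat" where
  "log2floor x = nat \<lfloor>log 2 (real x)\<rfloor>"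

record ('s, 'b) salg =
  init :: 's
  delta :: "'s \<Rightarrow> 'b \<Rightarrow> 's"
  acc :: "'s set"
  enc :: "'s \<Rightarrow> bool list"

definition run :: "('s, 'b) salg \<Rightarrow> 'b list \<Rightarrow> 's" where
  "run A u = foldl (delta A) (init A) u"

definition space :: "('s, 'b) salg \<Rightarrow> 'b list \<Rightarrow> nat" where
  "space A w = Max {length (enc A (run A (take i w))) | i. i \<le> length w}"

text \<open>None plays the role of the expiration symbol (down arrow).\<close>
fun wnd_step :: "'a list \<Rightarrow> 'a option \<Rightarrow> 'a list" where
  "wnd_step v (Some b) = v @ [b]"
| "wnd_step v None = tl v"

definition wnd :: "'a option list \<Rightarrow> 'a list" where
  "wnd w = foldl wnd_step [] w"

definition is_vsw_alg :: "'a list set \<Rightarrow> ('s, 'a option) salg \<Rightarrow> bool" where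
  "is_vsw_alg L A \<longleftrightarrow> inj (enc A) \<and> (\<forall>w. run A w \<in> acc A \<longleftrightarrow> wnd w \<in> L)"

definition vspace :: "('s, 'a option) salg \<Rightarrow> nat \<Rightarrow> enat" where
  "vspace A n = (SUP u \<in> {u. \<forall>i \<le> length u. length (wnd (take i u)) \<le> n}. enat (space A u))"

text \<open>Since encodings are injective into bit strings, every algorithm is isomorphic to one
  whose states are bit strings; hence we range over algorithms with state type bool list.\<close>
definition V :: "'a list set \<Rightarrow> nat \<Rightarrow> enat" where
  "V L n = (INF A \<in> {A :: (bool list, 'a option) salg. is_vsw_alg L A}. vspace A n)"

end

theory Submission
  imports Defs "HOL-Library.Countable_Set"
begin

text \<open>The window only matters through \<open>\<psi>\<^sub>L\<close> of it: \<open>\<psi>\<^sub>L\<close> is compatible with appending a letter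
  and with expiring the oldest one, and it determines membership in \<open>L\<close>. Hence an algorithm
  storing an injective code of \<open>\<psi>\<^sub>L(window)\<close>, with the at most \<open>|\<psi>\<^sub>L(\<Sigma>\<^sup>\<le>\<^sup>n)|\<close> relevant values
  coded by bit strings of length at most \<open>\<lfloor>log |\<psi>\<^sub>L(\<Sigma>\<^sup>\<le>\<^sup>n)|\<rfloor>\<close>, recognises the windowed language.
  Conversely, two windows \<open>x, y\<close> reaching the same state of any correct algorithm satisfy
  \<open>\<psi>\<^sub>L(x) = \<psi>\<^sub>L(y)\<close>: expiring \<open>i\<close> letters and appending \<open>z\<close> tests \<open>x[i..]z \<in> L\<close>, and windows of
  different lengths \<open>|x| < |y|\<close> are told apart because otherwise \<open>L\<close> would be invariant under
  deleting \<open>|y| - |x|\<close> leading letters, forcing \<open>L = \<emptyset>\<close> or \<open>L = \<Sigma>\<^sup>*\<close>. So the windows of length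
  at most \<open>n\<close> reach at least \<open>|\<psi>\<^sub>L(\<Sigma>\<^sup>\<le>\<^sup>n)|\<close> states, one of which needs that many bits.\<close>

lemma mn_equiv_refl: "mn_equiv L x x"
  by (simp add: mn_equiv_def)

lemma mn_equiv_append: "mn_equiv L x y \<Longrightarrow> mn_equiv L (x @ z) (y @ z)"
  by (simp add: mn_equiv_def)

lemma mn_class_eq_iff: "mn_class L x = mn_class L y \<longleftrightarrow> mn_equiv L x y"
  unfolding mn_class_def mn_equiv_def by blast

lemma length_psi [simp]: "length (psi L w) = length w"
  by (simp add: psi_def)

lemma psi_eq_iff:
  "psi L x = psi L y \<longleftrightarrow>
     length x = length y \<and> (\<forall>i<length x. mn_equiv L (drop i x) (drop i y))"
proof -
  have "psi L x ! i = psi L y ! i \<longleftrightarrow> mn_equiv L (drop i x) (drop i y)"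
    if "i < length x" "length x = length y" for i
    using that by (simp add: psi_def mn_class_eq_iff)
  then show ?thesis by (metis length_psi list_eq_iff_nth_eq)
qed

lemma psi_tl: "psi L (tl w) = tl (psi L w)"
proof (cases w)
  case (Cons a v)
  have "[0..<Suc m] = 0 # map Suc [0..<m]" for m
    by (simp add: map_Suc_upt upt_conv_Cons)
  with Cons show ?thesis by (simp add: psi_def)
qed (simp add: psi_def)

lemma psi_snoc:
  assumes "psi L x = psi L y"
  shows "psi L (x @ [b]) = psi L (y @ [b])"
proof -
  have len: "length x = length y"
    and equiv: "\<And>i. i < length x \<Longrightarrow> mn_equiv L (drop i x) (drop i y)"
    using assms by (auto simp: psi_eq_iff)
  have "mn_equiv L (drop i (x @ [b])) (drop i (y @ [b]))" if "i \<le> length x" for i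
  proof (cases "i < length x")
    case True
    have "mn_equiv L (drop i x @ [b]) (drop i y @ [b])"
      using equiv[OF True] by (rule mn_equiv_append)
    with True len show ?thesis by simp
  next
    case False
    with that len show ?thesis by (simp add: mn_equiv_refl)
  qed
  with len show ?thesis by (simp add: psi_eq_iff)
qed

lemma psi_wnd_step:
  assumes "psi L x = psi L y"
  shows "psi L (wnd_step x b) = psi L (wnd_step y b)"
  using assms psi_snoc by (cases b) (simp_all add: psi_tl)

lemma psi_eq_imp_mem_iff:
  assumes "psi L x = psi L y"
  shows "x \<in> L \<longleftrightarrow> y \<in> L"
proof (cases x)
  case Nil
  with assms show ?thesis by (metis length_0_conv length_psi)
next
  case (Cons a v)
  then have "0 < length x" by simp
  with assms have "mn_equiv L (drop 0 x) (drop 0 y)" unfolding psi_eq_iff by blast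
  then show ?thesis by (metis append_Nil2 drop_0 mn_equiv_def)
qed

lemma foldl_wnd_step_map_Some: "foldl wnd_step v (map Some z) = v @ z"
  by (induction z arbitrary: v) auto

lemma foldl_wnd_step_replicate_None: "foldl wnd_step v (replicate i None) = drop i v"
  by (induction i arbitrary: v) (auto simp: drop_Suc)

lemma wnd_append: "wnd (u @ c) = foldl wnd_step (wnd u) c"
  by (simp add: wnd_def)

lemma wnd_map_Some: "wnd (map Some x) = x"
  by (simp add: wnd_def foldl_wnd_step_map_Some)

lemma drop_invariant_language_trivial:
  assumes "\<And>z. drop k z \<in> L \<longleftrightarrow> z \<in> L" and "k > 0"
  shows "z \<in> L \<longleftrightarrow> [] \<in> L"
proof (induction "length z" arbitrary: z rule: less_induct)
  case less
  show ?case
  proof (cases "z = []")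
    case False
    with \<open>k > 0\<close> have "length (drop k z) < length z" by simp
    with less assms(1) show ?thesis by blast
  qed simp
qed

definition indistinguishable :: "'a list set \<Rightarrow> 'a list \<Rightarrow> 'a list \<Rightarrow> bool" where
  "indistinguishable L x y \<longleftrightarrow> (\<forall>c. foldl wnd_step x c \<in> L \<longleftrightarrow> foldl wnd_step y c \<in> L)"

lemma indistinguishable_length_eq:
  assumes "L \<noteq> {}" "L \<noteq> UNIV" and "indistinguishable L x y"
  shows "length x = length y"
proof (rule ccontr)
  assume "length x \<noteq> length y"
  with assms(3) obtain u v where uv: "indistinguishable L u v" "length u < length v"
    unfolding indistinguishable_def by (metis linorder_neqE_nat)
  define k where "k = length v - length u"
  have "drop k z \<in> L \<longleftrightarrow> z \<in> L" for z
  proof -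
    \<comment> \<open>expire \<open>u\<close> entirely, append \<open>z\<close>, then expire \<open>k\<close> more letters\<close>
    define c where "c = replicate (length u) None @ map Some z @ replicate k None"
    have "foldl wnd_step u c = drop k z" "foldl wnd_step v c = z"
      using uv(2) by (simp_all add: c_def k_def foldl_wnd_step_replicate_None foldl_wnd_step_map_Some)
    with uv(1) show ?thesis unfolding indistinguishable_def by metis
  qed
  moreover have "k > 0" using uv(2) by (simp add: k_def)
  ultimately have "z \<in> L \<longleftrightarrow> [] \<in> L" for z
    by (rule drop_invariant_language_trivial)
  with assms(1,2) show False by blast
qed

lemma indistinguishable_imp_psi_eq:
  assumes "L \<noteq> {}" "L \<noteq> UNIV" and "indistinguishable L x y"
  shows "psi L x = psi L y"
proof -
  have "mn_equiv L (drop i x) (drop i y)" for i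
    unfolding mn_equiv_def
  proof
    fix z
    have "foldl wnd_step x (replicate i None @ map Some z) = drop i x @ z"
         "foldl wnd_step y (replicate i None @ map Some z) = drop i y @ z"
      by (simp_all add: foldl_wnd_step_replicate_None foldl_wnd_step_map_Some)
    with assms(3) show "drop i x @ z \<in> L \<longleftrightarrow> drop i y @ z \<in> L"
      unfolding indistinguishable_def by metis
  qed
  with indistinguishable_length_eq[OF assms] show ?thesis by (simp add: psi_eq_iff)
qed

lemma run_append: "run A (u @ c) = foldl (delta A) (run A u) c"
  by (simp add: run_def)

lemma vsw_alg_same_state_imp_psi_eq:
  assumes "L \<noteq> {}" "L \<noteq> UNIV" "is_vsw_alg L A"
    and "run A (map Some x) = run A (map Some y)"
  shows "psi L x = psi L y"
proof (rule indistinguishable_imp_psi_eq[OF assms(1,2)])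
  have "foldl wnd_step x c \<in> L \<longleftrightarrow> foldl wnd_step y c \<in> L" for c
  proof -
    have "run A (map Some x @ c) = run A (map Some y @ c)"
      using assms(4) by (simp add: run_append)
    with assms(3) show ?thesis
      by (metis is_vsw_alg_def wnd_append wnd_map_Some)
  qed
  then show "indistinguishable L x y" by (simp add: indistinguishable_def)
qed

lemma card_bool_lists_length_le: "card {xs :: bool list. length xs \<le> k} = 2 ^ (k + 1) - 1"
proof -
  have "card {xs :: bool list. length xs \<le> k} = (\<Sum>i\<le>k. 2 ^ i)"
    using card_lists_length_le[of "UNIV :: bool set" k] by simp
  also have "\<dots> = 2 ^ (k + 1) - 1"
    by (induction k) auto
  finally show ?thesis .
qed

lemma finite_lists_length_le_UNIV: "finite {xs :: 'a::finite list. length xs \<le> k}"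
  using finite_lists_length_le[of "UNIV :: 'a set" k] by simp

lemma log2floor_bounds:
  assumes "m > 0"
  shows "2 ^ log2floor m \<le> m" and "m < 2 ^ (log2floor m + 1)"
proof -
  have "\<lfloor>log 2 (real m)\<rfloor> = int (log2floor m)"
    using assms by (simp add: log2floor_def)
  then show "2 ^ log2floor m \<le> m" "m < 2 ^ (log2floor m + 1)"
    using floor_log_nat_eq_powr_iff[of 2 m "log2floor m"] assms by simp_all
qed

lemma exists_bool_list_length_ge_log2floor:
  assumes "finite S" "0 < m" "m \<le> card S"
  shows "\<exists>xs \<in> S. log2floor m \<le> length (xs :: bool list)"
proof (rule ccontr)
  define k where "k = log2floor m"
  assume "\<not> ?thesis"
  then have short: "\<forall>xs\<in>S. length xs < k" by (auto simp: k_def)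
  from assms have "S \<noteq> {}" by auto
  with short have "k > 0" by fastforce
  from short have "S \<subseteq> {xs. length xs \<le> k - 1}" by fastforce
  then have "card S \<le> 2 ^ (k - 1 + 1) - 1"
    by (metis card_mono finite_lists_length_le_UNIV card_bool_lists_length_le)
  also have "\<dots> < 2 ^ k" using \<open>k > 0\<close> by simp
  also have "2 ^ k \<le> card S"
    using log2floor_bounds(1)[OF assms(2)] assms(3) by (simp add: k_def)
  finally show False by simp
qed

lemma exists_inj_on_code_short_on_finite:
  assumes "countable X" "finite P" "P \<subseteq> X" "card P < 2 ^ (k + 1)"
  shows "\<exists>code :: 'b \<Rightarrow> bool list. inj_on code X \<and> (\<forall>p\<in>P. length (code p) \<le> k)"
proof -
  have "card P \<le> card {xs :: bool list. length xs \<le> k}"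
    using assms(4) unfolding card_bool_lists_length_le by linarith
  then obtain g :: "'b \<Rightarrow> bool list" where g: "g ` P \<subseteq> {xs. length xs \<le> k}" "inj_on g P"
    using card_le_inj[OF assms(2) finite_lists_length_le_UNIV] by blast
  \<comment> \<open>values outside \<open>P\<close> get codes longer than \<open>k\<close>, hence distinct from those of \<open>P\<close>\<close>
  define code where
    "code p = (if p \<in> P then g p else replicate (Suc k + to_nat_on X p) True)" for p
  have "inj_on code X"
  proof (rule inj_onI)
    fix p q assume pq: "p \<in> X" "q \<in> X" "code p = code q"
    have "length (code r) \<le> k \<longleftrightarrow> r \<in> P" for r
      using g(1) by (auto simp: code_def)
    with pq(3) have PQ: "p \<in> P \<longleftrightarrow> q \<in> P" by metis
    show "p = q"
    proof (cases "p \<in> P")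
      case True
      with PQ pq(3) have "g p = g q" by (simp add: code_def)
      with True PQ g(2) show ?thesis by (auto dest: inj_onD)
    next
      case False
      with PQ pq(3) have "to_nat_on X p = to_nat_on X q" by (simp add: code_def)
      with pq(1,2) assms(1) show ?thesis by (meson inj_onD inj_on_to_nat_on)
    qed
  qed
  moreover have "\<forall>p\<in>P. length (code p) \<le> k"
    using g(1) by (auto simp: code_def)
  ultimately show ?thesis by blast
qed

definition psi_decode :: "'a list set \<Rightarrow> ('a list set list \<Rightarrow> bool list) \<Rightarrow> bool list \<Rightarrow> 'a list" where
  "psi_decode L code s = (SOME w. code (psi L w) = s)"

definition psi_alg :: "'a list set \<Rightarrow> ('a list set list \<Rightarrow> bool list) \<Rightarrow> (bool list, 'a option) salg" where
  "psi_alg L code =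
     \<lparr>init = code (psi L []),
      delta = (\<lambda>s b. code (psi L (wnd_step (psi_decode L code s) b))),
      acc = {s. psi_decode L code s \<in> L},
      enc = id\<rparr>"

lemma enc_psi_alg [simp]: "enc (psi_alg L code) = id"
  by (simp add: psi_alg_def)

lemma psi_psi_decode:
  assumes "inj_on code (range (psi L))"
  shows "psi L (psi_decode L code (code (psi L w))) = psi L w"
proof -
  have "code (psi L (psi_decode L code (code (psi L w)))) = code (psi L w)"
    unfolding psi_decode_def by (rule someI_ex) blast
  with assms show ?thesis by (auto dest: inj_onD)
qed

lemma run_psi_alg:
  assumes "inj_on code (range (psi L))"
  shows "run (psi_alg L code) u = code (psi L (wnd u))"
proof (induction u rule: rev_induct)
  case Nil
  show ?case by (simp add: psi_alg_def run_def wnd_def)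
next
  case (snoc b u)
  have "run (psi_alg L code) (u @ [b]) = code (psi L (wnd_step (psi_decode L code (run (psi_alg L code) u)) b))"
    by (simp add: run_append psi_alg_def)
  also have "\<dots> = code (psi L (wnd_step (wnd u) b))"
    using snoc psi_wnd_step[OF psi_psi_decode[OF assms]] by simp
  finally show ?case by (simp add: wnd_append)
qed

lemma is_vsw_alg_psi_alg:
  assumes "inj_on code (range (psi L))"
  shows "is_vsw_alg L (psi_alg L code)"
  unfolding is_vsw_alg_def
proof (intro conjI allI)
  show "inj (enc (psi_alg L code))" by simp
  fix w
  have "run (psi_alg L code) w \<in> acc (psi_alg L code)
          \<longleftrightarrow> psi_decode L code (code (psi L (wnd w))) \<in> L"
    by (simp add: run_psi_alg[OF assms]) (simp add: psi_alg_def)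
  also have "\<dots> \<longleftrightarrow> wnd w \<in> L"
    using psi_eq_imp_mem_iff[OF psi_psi_decode[OF assms]] .
  finally show "run (psi_alg L code) w \<in> acc (psi_alg L code) \<longleftrightarrow> wnd w \<in> L" .
qed

lemma length_enc_run_le_space: "length (enc A (run A w)) \<le> space A w"
proof -
  have "finite {length (enc A (run A (take i w))) | i. i \<le> length w}"
    by (rule finite_image_set) simp
  then show ?thesis unfolding space_def by (rule Max_ge) force
qed

lemma space_le:
  assumes "\<And>i. i \<le> length w \<Longrightarrow> length (enc A (run A (take i w))) \<le> k"
  shows "space A w \<le> k"
  unfolding space_def using assms by (subst Max_le_iff) (auto intro: finite_image_set)

lemma vspace_psi_alg_le:
  assumes "inj_on code (range (psi L))"
    and "\<forall>w. length w \<le> n \<longrightarrow> length (code (psi L w)) \<le> k"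
  shows "vspace (psi_alg L code) n \<le> enat k"
  unfolding vspace_def
proof (rule SUP_least)
  fix u :: "'a option list"
  assume "u \<in> {u. \<forall>i \<le> length u. length (wnd (take i u)) \<le> n}"
  then have "space (psi_alg L code) u \<le> k"
    using assms(2) by (intro space_le) (simp add: run_psi_alg[OF assms(1)])
  then show "enat (space (psi_alg L code) u) \<le> enat k" by simp
qed

lemma vspace_upper_bound:
  fixes L :: "('a::finite) list set"
  shows "\<exists>A :: (bool list, 'a option) salg. is_vsw_alg L A \<and>
           vspace A n \<le> enat (log2floor (card (psi L ` {w. length w \<le> n})))"
proof -
  define P where "P = psi L ` {w :: 'a list. length w \<le> n}"
  define k where "k = log2floor (card P)"
  have "finite P" unfolding P_def by (intro finite_imageI finite_lists_length_le_UNIV)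
  moreover have "psi L [] \<in> P" unfolding P_def by (intro imageI) simp
  ultimately have "0 < card P" by (auto simp: card_gt_0_iff)
  then have card_P: "card P < 2 ^ (k + 1)"
    unfolding k_def by (rule log2floor_bounds(2))
  have "countable (range (psi L))" by (intro countable_image countableI_type)
  moreover have "P \<subseteq> range (psi L)" unfolding P_def by blast
  ultimately obtain code :: "'a list set list \<Rightarrow> bool list"
    where code: "inj_on code (range (psi L))" "\<forall>p\<in>P. length (code p) \<le> k"
    using exists_inj_on_code_short_on_finite[OF _ \<open>finite P\<close> _ card_P] by blast
  have "vspace (psi_alg L code) n \<le> enat k"
    using code unfolding P_def by (intro vspace_psi_alg_le) blast+
  with is_vsw_alg_psi_alg[OF code(1)] show ?thesis
    unfolding k_def P_def by (intro exI conjI)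
qed

lemma card_image_le_card_image_if_factors:
  assumes "finite A" "\<And>x y. x \<in> A \<Longrightarrow> y \<in> A \<Longrightarrow> f x = f y \<Longrightarrow> g x = g y"
  shows "card (g ` A) \<le> card (f ` A)"
proof -
  have "g x = g (inv_into A f (f x))" if "x \<in> A" for x
    using that by (intro assms(2)) (simp_all add: inv_into_into f_inv_into_f)
  then have "g ` A = (\<lambda>s. g (inv_into A f s)) ` f ` A"
    unfolding image_image by (rule image_cong[OF refl])
  then show ?thesis using assms(1) by (simp add: card_image_le)
qed

lemma vspace_lower_bound:
  fixes L :: "('a::finite) list set" and A :: "('s, 'a option) salg"
  assumes "L \<noteq> {}" "L \<noteq> UNIV" "is_vsw_alg L A"
  shows "enat (log2floor (card (psi L ` {w. length w \<le> n}))) \<le> vspace A n"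
proof -
  define W where "W = {w :: 'a list. length w \<le> n}"
  define F where "F w = enc A (run A (map Some w))" for w
  have "finite W" unfolding W_def by (rule finite_lists_length_le_UNIV)
  have "card (psi L ` W) \<le> card (F ` W)"
  proof (rule card_image_le_card_image_if_factors[OF \<open>finite W\<close>])
    fix x y assume "F x = F y"
    with assms(3) have "run A (map Some x) = run A (map Some y)"
      by (auto simp: F_def is_vsw_alg_def dest: injD)
    then show "psi L x = psi L y" by (rule vsw_alg_same_state_imp_psi_eq[OF assms])
  qed
  moreover have "[] \<in> W" by (simp add: W_def)
  with \<open>finite W\<close> have "0 < card (psi L ` W)" "finite (F ` W)"
    by (auto simp: card_gt_0_iff)
  ultimately obtain w where w: "w \<in> W" "log2floor (card (psi L ` W)) \<le> length (F w)"
    using exists_bool_list_length_ge_log2floor[of "F ` W"] by auto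
  have "map Some w \<in> {u. \<forall>i \<le> length u. length (wnd (take i u)) \<le> n}"
    using w(1) by (auto simp: W_def take_map wnd_map_Some)
  moreover have "log2floor (card (psi L ` W)) \<le> space A (map Some w)"
    using w(2) length_enc_run_le_space[of A "map Some w"] by (simp add: F_def)
  ultimately show ?thesis
    unfolding vspace_def W_def by (intro SUP_upper2[where i = "map Some w"]) simp_all
qed

theorem theorem4p1:
  fixes L :: "('a::finite) list set" and n :: nat
  assumes "L \<noteq> {}" and "L \<noteq> UNIV"
  shows "V L n = enat (log2floor (card (psi L ` {w. length w \<le> n})))"
proof (rule antisym)
  obtain A :: "(bool list, 'a option) salg"
    where "is_vsw_alg L A" "vspace A n \<le> enat (log2floor (card (psi L ` {w. length w \<le> n})))"
    using vspace_upper_bound by blast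
  then show "V L n \<le> enat (log2floor (card (psi L ` {w. length w \<le> n})))"
    unfolding V_def by (intro INF_lower2[of A]) simp_all
next
  show "enat (log2floor (card (psi L ` {w. length w \<le> n}))) \<le> V L n"
    unfolding V_def using vspace_lower_bound[OF assms] by (intro INF_greatest) simp
qed

end
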